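(* Let $X$ be a linearly ordered set. The free $\mathrm{GD}^!$-algebra $\mathrm{GD}^!\langle X\rangle$ is linearly spanned by elements of the form $x_1*\dots*x_t*w$ with $t\ge 0$, $x_i\in X$, $x_1\le\dots\le x_t$, where $w$ is a monomial in $X$ built using the operation $\star$ only.
   Context: A $\mathrm{GD}^!$-algebra is a vector space with two bilinear operations $*$ and $\star$ such that $*$ is associative and commutative, and $(x\star y)\star z-x\star(y\star z)=(x\star z)\star y-x\star(z\star y)$, $x\star(y\star z)=y\star(x\star z)$, $x\star(y*z)=(x\star y)*z$, $x\star(y*z)+y\star(x*z)=(x*y)\star z$. *)

theory Defs
  imports Main "HOL-Library.Function_Algebras"
begin

text \<open>Nonassociative monomials in the generators X built from the two
operations: Ast = the commutative associative product *, Star = the product \<star>.\<close>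
datatype 'x mon = Gen 'x | Ast "'x mon" "'x mon" | Star "'x mon" "'x mon"

text \<open>Elements of the free (absolutely free, two-operation) algebra over a field 'k:
finitely supported functions from monomials to 'k.\<close>
definition delta :: "'x mon \<Rightarrow> ('x mon \<Rightarrow> 'k::field)" where
  "delta m = (\<lambda>u. if u = m then 1 else 0)"

definition fin_supp :: "('x mon \<Rightarrow> 'k::field) \<Rightarrow> bool" where
  "fin_supp p \<longleftrightarrow> finite {m. p m \<noteq> 0}"

text \<open>Bilinear extension of the products, multiplying a vector by a monomial.\<close>
definition ast_right :: "('x mon \<Rightarrow> 'k::field) \<Rightarrow> 'x mon \<Rightarrow> ('x mon \<Rightarrow> 'k)" where
  "ast_right p u = (\<lambda>m. case m of Ast a b \<Rightarrow> if b = u then p a else 0 | _ \<Rightarrow> 0)"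
definition ast_left :: "'x mon \<Rightarrow> ('x mon \<Rightarrow> 'k::field) \<Rightarrow> ('x mon \<Rightarrow> 'k)" where
  "ast_left u p = (\<lambda>m. case m of Ast a b \<Rightarrow> if a = u then p b else 0 | _ \<Rightarrow> 0)"
definition star_right :: "('x mon \<Rightarrow> 'k::field) \<Rightarrow> 'x mon \<Rightarrow> ('x mon \<Rightarrow> 'k)" where
  "star_right p u = (\<lambda>m. case m of Star a b \<Rightarrow> if b = u then p a else 0 | _ \<Rightarrow> 0)"
definition star_left :: "'x mon \<Rightarrow> ('x mon \<Rightarrow> 'k::field) \<Rightarrow> ('x mon \<Rightarrow> 'k)" where
  "star_left u p = (\<lambda>m. case m of Star a b \<Rightarrow> if a = u then p b else 0 | _ \<Rightarrow> 0)"

text \<open>The defining relations of GD!-algebras, instantiated at monomials a b c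
(all identities are multilinear, so these generate the full T-ideal).\<close>
definition gd_relators :: "('x mon \<Rightarrow> 'k::field) set" where
  "gd_relators = (\<Union>a b c.
     { delta (Ast a b) - delta (Ast b a),
       delta (Ast (Ast a b) c) - delta (Ast a (Ast b c)),
       delta (Star (Star a b) c) - delta (Star a (Star b c))
         - delta (Star (Star a c) b) + delta (Star a (Star c b)),
       delta (Star a (Star b c)) - delta (Star b (Star a c)),
       delta (Star a (Ast b c)) - delta (Ast (Star a b) c),
       delta (Star a (Ast b c)) + delta (Star b (Ast a c)) - delta (Star (Ast a b) c) })"

inductive_set gd_ideal :: "('x mon \<Rightarrow> 'k::field) set" where
  rel: "r \<in> gd_relators \<Longrightarrow> r \<in> gd_ideal"
| zero: "0 \<in> gd_ideal"
| add: "p \<in> gd_ideal \<Longrightarrow> q \<in> gd_ideal \<Longrightarrow> p + q \<in> gd_ideal"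
| smult: "p \<in> gd_ideal \<Longrightarrow> (\<lambda>m. c * p m) \<in> gd_ideal"
| ast_r: "p \<in> gd_ideal \<Longrightarrow> ast_right p u \<in> gd_ideal"
| ast_l: "p \<in> gd_ideal \<Longrightarrow> ast_left u p \<in> gd_ideal"
| star_r: "p \<in> gd_ideal \<Longrightarrow> star_right p u \<in> gd_ideal"
| star_l: "p \<in> gd_ideal \<Longrightarrow> star_left u p \<in> gd_ideal"

text \<open>The free GD!-algebra GD!<X> is the quotient of the free algebra by gd_ideal.\<close>

fun star_only :: "'x mon \<Rightarrow> bool" where
  "star_only (Gen x) = True"
| "star_only (Star a b) = (star_only a \<and> star_only b)"
| "star_only (Ast a b) = False"

text \<open>x1 * ... * xt * w (bracketed to the right; * is associative in GD!<X>).\<close>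
definition ast_word :: "'x list \<Rightarrow> 'x mon \<Rightarrow> 'x mon" where
  "ast_word xs w = foldr (\<lambda>x acc. Ast (Gen x) acc) xs w"

definition normal_word :: "'x::linorder mon \<Rightarrow> bool" where
  "normal_word m \<longleftrightarrow> (\<exists>xs w. sorted xs \<and> star_only w \<and> m = ast_word xs w)"

end

theory Submission
  imports Defs "HOL.Modules"
begin

text \<open>By structural
  induction and bilinearity it suffices to treat the product of two normal words. Commutativity
  and associativity of \<open>*\<close> collect the letters of both factors in front, and a product \<open>w\<^sub>1 * w\<^sub>2\<close>
  of \<open>\<star>\<close>-words becomes \<open>x * w\<close> via \<open>(a \<star> b) * w\<^sub>2 \<equiv> b * (a \<star> w\<^sub>2)\<close>. In a product \<open>u \<star> v\<close> the
  identity \<open>a \<star> (y * v) \<equiv> y * (a \<star> v)\<close> moves the letters of \<open>v\<close> to the front, while a letter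
  \<open>x\<close> of \<open>u = x * r\<close> is removed by \<open>(x * r) \<star> c \<equiv> x \<star> (r * c) + r \<star> (x * c)\<close>, whose
  summands are a \<open>\<star>\<close>-letter times a normal word and a shorter instance, respectively.\<close>

interpretation fun_module: module "\<lambda>c (p :: 'a \<Rightarrow> 'k::field) m. c * p m"
  by standard (simp_all add: fun_eq_iff algebra_simps)

lemma gd_ideal_subspace: "fun_module.subspace gd_ideal"
  by (rule fun_module.subspaceI) (auto intro: gd_ideal.intros)

lemma ast_right_linear:
  "ast_right (p + q) c = ast_right p c + ast_right q c"
  "ast_right (p - q) c = ast_right p c - ast_right q c"
  "ast_right (\<lambda>m. k * p m) c = (\<lambda>m. k * ast_right p c m)"
  by (auto simp: fun_eq_iff ast_right_def split: mon.split)

lemma ast_left_linear: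
  "ast_left c (p + q) = ast_left c p + ast_left c q"
  "ast_left c (p - q) = ast_left c p - ast_left c q"
  "ast_left c (\<lambda>m. k * p m) = (\<lambda>m. k * ast_left c p m)"
  by (auto simp: fun_eq_iff ast_left_def split: mon.split)

lemma star_right_linear:
  "star_right (p + q) c = star_right p c + star_right q c"
  "star_right (\<lambda>m. k * p m) c = (\<lambda>m. k * star_right p c m)"
  by (auto simp: fun_eq_iff star_right_def split: mon.split)

lemma star_left_linear:
  "star_left c (p + q) = star_left c p + star_left c q"
  "star_left c (p - q) = star_left c p - star_left c q"
  "star_left c (\<lambda>m. k * p m) = (\<lambda>m. k * star_left c p m)"
  by (auto simp: fun_eq_iff star_left_def split: mon.split)

lemma products_delta:
  "ast_right (delta a) c = delta (Ast a c)"
  "ast_left c (delta a) = delta (Ast c a)"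
  "star_right (delta a) c = delta (Star a c)"
  "star_left c (delta a) = delta (Star c a)"
  by (auto simp: fun_eq_iff delta_def ast_right_def ast_left_def star_right_def star_left_def
      split: mon.split)

lemma inj_delta: "inj (delta :: 'x mon \<Rightarrow> 'x mon \<Rightarrow> 'k::field)"
  by (rule injI) (metis delta_def one_neq_zero)

lemma sum_fun_apply: "(\<Sum>m\<in>S. f m) u = (\<Sum>m\<in>S. f m u)"
  by (induction S rule: infinite_finite_induct) auto

lemma delta_decomposition:
  assumes "fin_supp p"
  shows "p = (\<Sum>m | p m \<noteq> 0. (\<lambda>u. p m * delta m u))"
proof (rule ext)
  fix u
  have "(\<Sum>m | p m \<noteq> 0. (\<lambda>u. p m * delta m u)) u = (\<Sum>m | p m \<noteq> 0. if m = u then p m else 0)"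
    unfolding sum_fun_apply by (rule sum.cong) (auto simp: delta_def)
  also have "\<dots> = p u"
    using assms by (simp add: fin_supp_def sum.delta)
  finally show "p u = (\<Sum>m | p m \<noteq> 0. (\<lambda>u. p m * delta m u)) u" by simp
qed

subsection \<open>Congruence of monomials\<close>

definition mon_cong :: "'k::field itself \<Rightarrow> 'x mon \<Rightarrow> 'x mon \<Rightarrow> bool" where
  "mon_cong K a b \<longleftrightarrow> (delta a - delta b :: 'x mon \<Rightarrow> 'k) \<in> gd_ideal"

lemma mon_cong_refl: "mon_cong K a a"
  by (simp add: mon_cong_def gd_ideal.zero)

lemma mon_cong_sym: "mon_cong K a b \<Longrightarrow> mon_cong K b a"
  unfolding mon_cong_def
  by (metis fun_module.subspace_neg gd_ideal_subspace minus_diff_eq)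

lemma mon_cong_trans [trans]: "mon_cong K a b \<Longrightarrow> mon_cong K b c \<Longrightarrow> mon_cong K a c"
  unfolding mon_cong_def by (drule (1) gd_ideal.add) simp

lemma mon_cong_Ast1: "mon_cong K a b \<Longrightarrow> mon_cong K (Ast a c) (Ast b c)"
  unfolding mon_cong_def
  by (drule gd_ideal.ast_r[where u = c]) (simp add: ast_right_linear products_delta)

lemma mon_cong_Ast2: "mon_cong K a b \<Longrightarrow> mon_cong K (Ast c a) (Ast c b)"
  unfolding mon_cong_def
  by (drule gd_ideal.ast_l[where u = c]) (simp add: ast_left_linear products_delta)

lemma mon_cong_Star2: "mon_cong K a b \<Longrightarrow> mon_cong K (Star c a) (Star c b)"
  unfolding mon_cong_def
  by (drule gd_ideal.star_l[where u = c]) (simp add: star_left_linear products_delta)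

lemma mon_cong_Ast_commute: "mon_cong K (Ast a b) (Ast b a)"
  unfolding mon_cong_def by (rule gd_ideal.rel) (auto simp: gd_relators_def)

lemma mon_cong_Ast_assoc: "mon_cong K (Ast (Ast a b) c) (Ast a (Ast b c))"
  unfolding mon_cong_def by (rule gd_ideal.rel) (auto simp: gd_relators_def)

lemma mon_cong_Star_Ast: "mon_cong K (Star a (Ast b c)) (Ast (Star a b) c)"
  unfolding mon_cong_def by (rule gd_ideal.rel) (auto simp: gd_relators_def)

lemma delta_Star_Ast_left:
  "delta (Star (Ast a b) c) - (delta (Star a (Ast b c)) + delta (Star b (Ast a c))) \<in> gd_ideal"
proof -
  have "delta (Star a (Ast b c)) + delta (Star b (Ast a c)) - delta (Star (Ast a b) c) \<in> gd_ideal"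
    by (rule gd_ideal.rel) (auto simp: gd_relators_def)
  then show ?thesis
    by (metis fun_module.subspace_neg gd_ideal_subspace minus_diff_eq)
qed

lemma mon_cong_Ast_left_commute: "mon_cong K (Ast a (Ast b c)) (Ast b (Ast a c))"
proof -
  have "mon_cong K (Ast a (Ast b c)) (Ast (Ast a b) c)" by (rule mon_cong_sym, rule mon_cong_Ast_assoc)
  also have "mon_cong K \<dots> (Ast (Ast b a) c)" by (rule mon_cong_Ast1, rule mon_cong_Ast_commute)
  also have "mon_cong K \<dots> (Ast b (Ast a c))" by (rule mon_cong_Ast_assoc)
  finally show ?thesis .
qed

lemma mon_cong_Ast_star_only:
  assumes "star_only w\<^sub>1" "star_only w\<^sub>2"
  shows "\<exists>x w. star_only w \<and> mon_cong K (Ast w\<^sub>1 w\<^sub>2) (Ast (Gen x) w)"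
  using assms
proof (induction w\<^sub>1 arbitrary: w\<^sub>2)
  case (Gen x)
  then show ?case by (auto intro: mon_cong_refl)
next
  case (Ast a b)
  then show ?case by simp
next
  case (Star a b)
  have "mon_cong K (Ast (Star a b) w\<^sub>2) (Star a (Ast b w\<^sub>2))" by (rule mon_cong_sym, rule mon_cong_Star_Ast)
  also have "mon_cong K \<dots> (Star a (Ast w\<^sub>2 b))" by (rule mon_cong_Star2, rule mon_cong_Ast_commute)
  also have "mon_cong K \<dots> (Ast (Star a w\<^sub>2) b)" by (rule mon_cong_Star_Ast)
  also have "mon_cong K \<dots> (Ast b (Star a w\<^sub>2))" by (rule mon_cong_Ast_commute)
  finally have swap: "mon_cong K (Ast (Star a b) w\<^sub>2) (Ast b (Star a w\<^sub>2))" .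
  obtain x w where "star_only w" "mon_cong K (Ast b (Star a w\<^sub>2)) (Ast (Gen x) w)"
    using Star.IH(2)[of "Star a w\<^sub>2"] Star.prems by auto
  then show ?case using mon_cong_trans[OF swap] by blast
qed

subsection \<open>Words with a \<open>*\<close>-prefix of letters\<close>

lemma ast_word_simps [simp]:
  "ast_word [] w = w"
  "ast_word (x # xs) w = Ast (Gen x) (ast_word xs w)"
  "ast_word (xs @ ys) w = ast_word xs (ast_word ys w)"
  by (simp_all add: ast_word_def)

lemma mon_cong_ast_word: "mon_cong K a b \<Longrightarrow> mon_cong K (ast_word xs a) (ast_word xs b)"
  by (induction xs) (auto intro: mon_cong_Ast2)

lemma mon_cong_insort: "mon_cong K (Ast (Gen x) (ast_word ys w)) (ast_word (insort x ys) w)"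
proof (induction ys)
  case Nil
  show ?case by (simp add: mon_cong_refl)
next
  case (Cons y ys)
  show ?case
  proof (cases "x \<le> y")
    case True
    then show ?thesis by (simp add: mon_cong_refl)
  next
    case False
    have "mon_cong K (Ast (Gen x) (ast_word (y # ys) w)) (Ast (Gen y) (Ast (Gen x) (ast_word ys w)))"
      by (simp add: mon_cong_Ast_left_commute)
    also have "mon_cong K \<dots> (Ast (Gen y) (ast_word (insort x ys) w))"
      by (rule mon_cong_Ast2) (rule Cons.IH)
    finally show ?thesis using False by simp
  qed
qed

lemma mon_cong_sort: "mon_cong K (ast_word xs w) (ast_word (sort xs) w)"
proof (induction xs)
  case Nil
  show ?case by (simp add: mon_cong_refl)
next
  case (Cons x xs)
  have "mon_cong K (ast_word (x # xs) w) (Ast (Gen x) (ast_word (sort xs) w))"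
    using mon_cong_Ast2[OF Cons.IH] by simp
  also have "mon_cong K \<dots> (ast_word (insort x (sort xs)) w)" by (rule mon_cong_insort)
  finally show ?case by simp
qed

lemma mon_cong_Ast_ast_word_left: "mon_cong K (Ast (ast_word xs w) m) (ast_word xs (Ast w m))"
proof (induction xs)
  case Nil
  show ?case by (simp add: mon_cong_refl)
next
  case (Cons x xs)
  have "mon_cong K (Ast (ast_word (x # xs) w) m) (Ast (Gen x) (Ast (ast_word xs w) m))"
    by (simp add: mon_cong_Ast_assoc)
  also have "mon_cong K \<dots> (ast_word (x # xs) (Ast w m))"
    using mon_cong_Ast2[OF Cons.IH] by simp
  finally show ?case .
qed

lemma mon_cong_Ast_ast_word_right: "mon_cong K (Ast m (ast_word ys w)) (ast_word ys (Ast m w))"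
proof (induction ys)
  case Nil
  show ?case by (simp add: mon_cong_refl)
next
  case (Cons y ys)
  have "mon_cong K (Ast m (ast_word (y # ys) w)) (Ast (Gen y) (Ast m (ast_word ys w)))"
    by (simp add: mon_cong_Ast_left_commute)
  also have "mon_cong K \<dots> (ast_word (y # ys) (Ast m w))"
    using mon_cong_Ast2[OF Cons.IH] by simp
  finally show ?case .
qed

lemma mon_cong_Star_ast_word: "mon_cong K (Star a (ast_word ys w)) (ast_word ys (Star a w))"
proof (induction ys)
  case Nil
  show ?case by (simp add: mon_cong_refl)
next
  case (Cons y ys)
  have "mon_cong K (Star a (ast_word (y # ys) w)) (Star a (Ast (ast_word ys w) (Gen y)))"
    by (simp add: mon_cong_Star2 mon_cong_Ast_commute)
  also have "mon_cong K \<dots> (Ast (Star a (ast_word ys w)) (Gen y))" by (rule mon_cong_Star_Ast)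
  also have "mon_cong K \<dots> (Ast (Gen y) (Star a (ast_word ys w)))" by (rule mon_cong_Ast_commute)
  also have "mon_cong K \<dots> (ast_word (y # ys) (Star a w))"
    using mon_cong_Ast2[OF Cons.IH] by simp
  finally show ?case .
qed

subsection \<open>The span of the normal words modulo the ideal\<close>

definition normal_span :: "('x::linorder mon \<Rightarrow> 'k::field) set" where
  "normal_span = fun_module.span (delta ` {m. normal_word m} \<union> gd_ideal)"

lemma normal_span_subspace: "fun_module.subspace normal_span"
  by (simp add: normal_span_def)

lemma normal_span_modulo_ideal:
  "p - q \<in> gd_ideal \<Longrightarrow> q \<in> normal_span \<Longrightarrow> p \<in> normal_span"
  unfolding normal_span_def
  by (metis diff_add_cancel fun_module.span_add fun_module.span_base UnI2)

lemma normal_span_mon_cong: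
  fixes K :: "'k::field itself"
  shows "mon_cong K a b \<Longrightarrow> (delta b :: _ \<Rightarrow> 'k) \<in> normal_span \<Longrightarrow> (delta a :: _ \<Rightarrow> 'k) \<in> normal_span"
  unfolding mon_cong_def by (rule normal_span_modulo_ideal)

lemma normal_span_linear_image:
  assumes add: "\<And>p q. \<phi> (p + q) = \<phi> p + \<phi> q"
    and scale: "\<And>c p. \<phi> (\<lambda>m. c * p m) = (\<lambda>m. c * \<phi> p m)"
    and ideal: "\<And>p. p \<in> gd_ideal \<Longrightarrow> \<phi> p \<in> gd_ideal"
    and normal: "\<And>n. normal_word n \<Longrightarrow> \<phi> (delta n) \<in> normal_span"
    and "p \<in> normal_span"
  shows "\<phi> p \<in> normal_span"
proof -
  have "\<phi> 0 = 0" using add[of 0 0] by simp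
  then have "fun_module.subspace {p. \<phi> p \<in> normal_span}"
    using normal_span_subspace
    by (auto simp: fun_module.subspace_def add scale simp del: fun_module.span_eq_iff)
  moreover have "\<phi> p \<in> normal_span" if "p \<in> delta ` {m. normal_word m} \<union> gd_ideal" for p
    using that normal ideal normal_span_modulo_ideal[of _ 0] fun_module.subspace_0[OF normal_span_subspace]
    by auto
  ultimately show ?thesis
    using \<open>p \<in> normal_span\<close> fun_module.span_subspace_induct[of p _ "{p. \<phi> p \<in> normal_span}"]
    unfolding normal_span_def by blast
qed

lemma normal_span_explicit:
  assumes "p \<in> normal_span"
  shows "\<exists>S c. finite S \<and> (\<forall>m\<in>S. normal_word m) \<and>
    p - (\<Sum>m\<in>S. (\<lambda>u. c m * delta m u)) \<in> gd_ideal"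
proof -
  have "fun_module.span gd_ideal = gd_ideal"
    by (simp add: gd_ideal_subspace)
  then obtain q i where q: "q \<in> fun_module.span (delta ` {m. normal_word m})" and i: "i \<in> gd_ideal"
    and p: "p = q + i"
    using assms unfolding normal_span_def fun_module.span_Un by blast
  obtain T r where "finite T" "T \<subseteq> delta ` {m. normal_word m}" and q_sum: "q = (\<Sum>v\<in>T. (\<lambda>u. r v * v u))"
    using q unfolding fun_module.span_explicit by blast
  then obtain S where S: "S \<subseteq> {m. normal_word m}" "T = delta ` S"
    by (meson subset_imageE)
  have "finite S"
    using \<open>finite T\<close> S(2) finite_imageD inj_delta by (metis inj_on_subset subset_UNIV)
  moreover have "q = (\<Sum>m\<in>S. (\<lambda>u. r (delta m) * delta m u))"
    unfolding q_sum S(2) by (subst sum.reindex) (auto intro: inj_on_subset[OF inj_delta])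
  ultimately show ?thesis
    using S(1) i p by (intro exI[of _ S] exI[of _ "r \<circ> delta"]) auto
qed

lemma normal_span_ast_word_star_only:
  assumes "star_only w"
  shows "(delta (ast_word xs w) :: _ \<Rightarrow> 'k::field) \<in> normal_span"
proof (rule normal_span_mon_cong[OF mon_cong_sort])
  have "normal_word (ast_word (sort xs) w)"
    using assms unfolding normal_word_def by (metis sorted_sort)
  then show "(delta (ast_word (sort xs) w) :: _ \<Rightarrow> 'k) \<in> normal_span"
    unfolding normal_span_def by (blast intro: fun_module.span_base)
qed

lemma normal_span_Ast_normal:
  assumes "normal_word n\<^sub>1" "normal_word n\<^sub>2"
  shows "(delta (Ast n\<^sub>1 n\<^sub>2) :: _ \<Rightarrow> 'k::field) \<in> normal_span"
proof -
  obtain xs w\<^sub>1 ys w\<^sub>2 where w: "star_only w\<^sub>1" "star_only w\<^sub>2"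
    and n: "n\<^sub>1 = ast_word xs w\<^sub>1" "n\<^sub>2 = ast_word ys w\<^sub>2"
    using assms unfolding normal_word_def by blast
  obtain z w where "star_only w" and e: "mon_cong TYPE('k) (Ast w\<^sub>1 w\<^sub>2) (Ast (Gen z) w)"
    using mon_cong_Ast_star_only[OF w] by blast
  have "mon_cong TYPE('k) (Ast n\<^sub>1 n\<^sub>2) (ast_word xs (Ast w\<^sub>1 (ast_word ys w\<^sub>2)))"
    unfolding n by (rule mon_cong_Ast_ast_word_left)
  also have "mon_cong TYPE('k) \<dots> (ast_word xs (ast_word ys (Ast w\<^sub>1 w\<^sub>2)))"
    by (intro mon_cong_ast_word mon_cong_Ast_ast_word_right)
  also have "mon_cong TYPE('k) \<dots> (ast_word xs (ast_word ys (Ast (Gen z) w)))"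
    by (intro mon_cong_ast_word e)
  also have "\<dots> = ast_word (xs @ ys @ [z]) w" by simp
  finally show ?thesis
    using normal_span_mon_cong normal_span_ast_word_star_only[OF \<open>star_only w\<close>] by blast
qed

lemma normal_span_ast_word:
  assumes "(delta m :: _ \<Rightarrow> 'k::field) \<in> normal_span"
  shows "(delta (ast_word ys m) :: _ \<Rightarrow> 'k) \<in> normal_span"
proof (induction ys)
  case Nil
  then show ?case using assms by simp
next
  case (Cons y ys)
  have "ast_left (Gen y) (delta (ast_word ys m) :: _ \<Rightarrow> 'k) \<in> normal_span"
  proof (rule normal_span_linear_image[where \<phi> = "ast_left (Gen y)"])
    fix n :: "'a mon"
    assume "normal_word n"
    then obtain zs w where "star_only w" "n = ast_word zs w"
      unfolding normal_word_def by blast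
    then show "ast_left (Gen y) (delta n :: _ \<Rightarrow> 'k) \<in> normal_span"
      using normal_span_ast_word_star_only[of w "y # zs"] by (simp add: products_delta)
  qed (use Cons in \<open>simp_all add: ast_left_linear gd_ideal.ast_l\<close>)
  then show ?case by (simp add: products_delta)
qed

lemma normal_span_Star_ast_word:
  assumes "star_only w" "star_only c"
  shows "(delta (Star (ast_word xs w) c) :: _ \<Rightarrow> 'k::field) \<in> normal_span"
  using assms
proof (induction xs)
  case Nil
  then show ?case using normal_span_ast_word_star_only[of "Star w c" "[]"] by simp
next
  case (Cons x xs)
  define r where "r = ast_word xs w"
  obtain z v where "star_only v" and e: "mon_cong TYPE('k) (Ast w c) (Ast (Gen z) v)"
    using mon_cong_Ast_star_only[OF Cons.prems] by blast
  have "mon_cong TYPE('k) (Star (Gen x) (Ast r c)) (Star (Gen x) (ast_word xs (Ast w c)))"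
    unfolding r_def by (intro mon_cong_Star2 mon_cong_Ast_ast_word_left)
  also have "mon_cong TYPE('k) \<dots> (Star (Gen x) (ast_word (xs @ [z]) v))"
    using mon_cong_Star2[OF mon_cong_ast_word[OF e]] by simp
  also have "mon_cong TYPE('k) \<dots> (ast_word (xs @ [z]) (Star (Gen x) v))"
    by (rule mon_cong_Star_ast_word)
  finally have first: "(delta (Star (Gen x) (Ast r c)) :: _ \<Rightarrow> 'k) \<in> normal_span"
    by (rule normal_span_mon_cong)
      (rule normal_span_ast_word_star_only, simp add: \<open>star_only v\<close>)
  have "mon_cong TYPE('k) (Star r (Ast (Gen x) c)) (ast_word [x] (Star r c))"
    using mon_cong_Star_ast_word[of "TYPE('k)" r "[x]" c] by simp
  then have second: "(delta (Star r (Ast (Gen x) c)) :: _ \<Rightarrow> 'k) \<in> normal_span"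
    using normal_span_mon_cong normal_span_ast_word Cons r_def by blast
  have "(delta (Star (Gen x) (Ast r c)) + delta (Star r (Ast (Gen x) c)) :: _ \<Rightarrow> 'k) \<in> normal_span"
    using first second fun_module.subspace_add[OF normal_span_subspace] by blast
  then show ?case
    using normal_span_modulo_ideal[OF delta_Star_Ast_left] by (simp add: r_def)
qed

lemma normal_span_Star_normal:
  assumes "normal_word n\<^sub>1" "normal_word n\<^sub>2"
  shows "(delta (Star n\<^sub>1 n\<^sub>2) :: _ \<Rightarrow> 'k::field) \<in> normal_span"
proof -
  obtain xs w\<^sub>1 ys w\<^sub>2 where w: "star_only w\<^sub>1" "star_only w\<^sub>2"
    and n: "n\<^sub>1 = ast_word xs w\<^sub>1" "n\<^sub>2 = ast_word ys w\<^sub>2"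
    using assms unfolding normal_word_def by blast
  have "mon_cong TYPE('k) (Star n\<^sub>1 n\<^sub>2) (ast_word ys (Star n\<^sub>1 w\<^sub>2))"
    unfolding n by (rule mon_cong_Star_ast_word)
  moreover have "(delta (ast_word ys (Star n\<^sub>1 w\<^sub>2)) :: _ \<Rightarrow> 'k) \<in> normal_span"
    using normal_span_ast_word normal_span_Star_ast_word[OF w] n by blast
  ultimately show ?thesis by (rule normal_span_mon_cong)
qed

lemma delta_in_normal_span: "(delta m :: 'x::linorder mon \<Rightarrow> 'k::field) \<in> normal_span"
proof (induction m)
  case (Gen x)
  then show ?case using normal_span_ast_word_star_only[of "Gen x" "[]"] by simp
next
  case (Ast a b)
  have "ast_right (delta a) b \<in> (normal_span :: ('x mon \<Rightarrow> 'k) set)"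
  proof (rule normal_span_linear_image[where \<phi> = "\<lambda>p. ast_right p b"])
    fix n :: "'x mon"
    assume n: "normal_word n"
    have "ast_left n (delta b) \<in> (normal_span :: ('x mon \<Rightarrow> 'k) set)"
      by (rule normal_span_linear_image[where \<phi> = "ast_left n"])
        (use Ast n normal_span_Ast_normal in \<open>simp_all add: ast_left_linear gd_ideal.ast_l products_delta\<close>)
    then show "ast_right (delta n) b \<in> (normal_span :: ('x mon \<Rightarrow> 'k) set)"
      by (simp add: products_delta)
  qed (use Ast in \<open>simp_all add: ast_right_linear gd_ideal.ast_r\<close>)
  then show ?case by (simp add: products_delta)
next
  case (Star a b)
  have "star_right (delta a) b \<in> (normal_span :: ('x mon \<Rightarrow> 'k) set)"
  proof (rule normal_span_linear_image[where \<phi> = "\<lambda>p. star_right p b"])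
    fix n :: "'x mon"
    assume n: "normal_word n"
    have "star_left n (delta b) \<in> (normal_span :: ('x mon \<Rightarrow> 'k) set)"
      by (rule normal_span_linear_image[where \<phi> = "star_left n"])
        (use Star n normal_span_Star_normal in \<open>simp_all add: star_left_linear gd_ideal.star_l products_delta\<close>)
    then show "star_right (delta n) b \<in> (normal_span :: ('x mon \<Rightarrow> 'k) set)"
      by (simp add: products_delta)
  qed (use Star in \<open>simp_all add: star_right_linear gd_ideal.star_r\<close>)
  then show ?case by (simp add: products_delta)
qed

theorem mainTheorem5:
  fixes p :: "'x::linorder mon \<Rightarrow> 'k::field"
  assumes "fin_supp p"
  shows "\<exists>(S :: 'x mon set) (c :: 'x mon \<Rightarrow> 'k). finite S \<and> (\<forall>m\<in>S. normal_word m) \<and>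
           p - (\<Sum>m\<in>S. (\<lambda>u. c m * delta m u)) \<in> gd_ideal"
proof (rule normal_span_explicit)
  have "(\<Sum>m | p m \<noteq> 0. (\<lambda>u. p m * delta m u)) \<in> normal_span"
    using fun_module.subspace_scale[OF normal_span_subspace delta_in_normal_span]
    by (intro fun_module.subspace_sum[OF normal_span_subspace]) blast
  then show "p \<in> normal_span"
    using delta_decomposition[OF assms] by simp
qed

end
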